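(* Let $A, B \in M_n(\mathbb{C})$ and assume that $A$ satisfies: for all $\lambda,\mu \in \mathrm{Sp}(A)$, if $\lambda - \mu \in 2i\pi\mathbb{Q}$ then $\lambda - \mu \in 2i\pi\mathbb{Z}$. Then there exists an integer $k \geq 1$ such that the map $\gamma_k : \mathrm{Sp}(e^A) \times \mathrm{Sp}(e^B) \to \mathbb{C}$, $(\lambda,\mu) \mapsto \lambda^k\mu$, is injective.
   Context: $e^M$ denotes the matrix exponential; $\mathrm{Sp}(M)$ is the set of eigenvalues of $M$. *)

theory Defs
  imports Complex_Main "Jordan_Normal_Form.Matrix" "Jordan_Normal_Form.Char_Poly"
begin

definition mat_exp :: "complex mat \<Rightarrow> complex mat" where
  "mat_exp M = mat (dim_row M) (dim_col M)
     (\<lambda>(i, j). \<Sum>k. (M ^\<^sub>m k) $$ (i, j) / of_nat (fact k))"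

definition Sp :: "complex mat \<Rightarrow> complex set" where
  "Sp M = {x. eigenvalue M x}"

end

theory Submission
  imports Defs "Jordan_Normal_Form.Schur_Decomposition" "HOL-Analysis.Complex_Transcendental"
begin

(* Put A and B in Schur form: A is similar to an upper triangular U, so
   e^A is similar to e^U, which is upper triangular with diagonal exp(U_ii).  Hence
   Sp(e^A) = exp ` Sp(A) is finite and consists of nonzero numbers, and likewise for B.
   The arithmetic hypothesis on Sp(A) says exactly that two elements of Sp(e^A) with
   equal d-th powers (d >= 1) coincide.  For such a finite set S and any finite set T
   of nonzero numbers, a pair l <> l' in S together with m, m' in T satisfies
   l^k m = l'^k m' for at most one exponent k (two solutions would give l^d = l'^d).
   So only finitely many k are "bad", and any other k >= 1 makes (l,m) |-> l^k m
   injective on S x T. *)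

section \<open>Convergence of the exponential series of a matrix\<close>

lemma mat_mult_entry:
  fixes A B :: "'a::comm_ring_1 mat"
  assumes "A \<in> carrier_mat n m" "B \<in> carrier_mat m p" "i < n" "j < p"
  shows "(A * B) $$ (i,j) = (\<Sum>l<m. A $$ (i,l) * B $$ (l,j))"
  using assms by (auto simp: scalar_prod_def lessThan_atLeast0 intro!: sum.cong)

text \<open>Every entry of \<open>M^k\<close> is bounded by \<open>c^k\<close>, where \<open>c\<close> is the sum of the norms of
  all entries of \<open>M\<close>; this dominates the matrix exponential series by \<open>exp c\<close>.\<close>
lemma mat_pow_entry_bound:
  fixes M :: "complex mat"
  assumes M: "M \<in> carrier_mat n n" and "i < n" "j < n"
  shows "norm ((M ^\<^sub>m k) $$ (i,j)) \<le> (\<Sum>a<n. \<Sum>b<n. norm (M $$ (a,b))) ^ k"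
  using assms(2,3)
proof (induction k arbitrary: i j)
  case 0
  then show ?case using M by (cases "i = j") auto
next
  case (Suc k)
  let ?c = "\<Sum>a<n. \<Sum>b<n. norm (M $$ (a,b))"
  have "(M ^\<^sub>m Suc k) $$ (i,j) = (\<Sum>l<n. (M ^\<^sub>m k) $$ (i,l) * M $$ (l,j))"
    using Suc.prems M by (simp only: pow_mat.simps(2), intro mat_mult_entry[of _ n n _ n]) auto
  hence "norm ((M ^\<^sub>m Suc k) $$ (i,j)) \<le> (\<Sum>l<n. norm ((M ^\<^sub>m k) $$ (i,l)) * norm (M $$ (l,j)))"
    by (metis (no_types, lifting) norm_mult norm_sum sum.cong)
  also have "\<dots> \<le> (\<Sum>l<n. ?c ^ k * norm (M $$ (l,j)))"
    by (intro sum_mono mult_right_mono Suc.IH Suc.prems) auto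
  also have "\<dots> = ?c ^ k * (\<Sum>l<n. norm (M $$ (l,j)))"
    by (simp add: sum_distrib_left)
  also have "\<dots> \<le> ?c ^ k * ?c"
  proof (rule mult_left_mono)
    show "(\<Sum>l<n. norm (M $$ (l,j))) \<le> ?c"
      using Suc.prems by (intro sum_mono member_le_sum) auto
  qed (simp add: sum_nonneg)
  finally show ?case by (simp add: mult.commute)
qed

lemma mat_exp_series_summable:
  fixes M :: "complex mat"
  assumes "M \<in> carrier_mat n n" "i < n" "j < n"
  shows "summable (\<lambda>k. (M ^\<^sub>m k) $$ (i,j) / of_nat (fact k))"
proof (rule summable_comparison_test)
  let ?c = "\<Sum>a<n. \<Sum>b<n. norm (M $$ (a,b))"
  show "summable (\<lambda>k. inverse (fact k) * ?c ^ k)" by (rule summable_exp)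
  have "norm ((M ^\<^sub>m k) $$ (i,j) / of_nat (fact k)) \<le> inverse (fact k) * ?c ^ k" for k
  proof -
    have "norm ((M ^\<^sub>m k) $$ (i,j) / of_nat (fact k)) = norm ((M ^\<^sub>m k) $$ (i,j)) / fact k"
      by (simp add: norm_divide)
    also have "\<dots> \<le> ?c ^ k / fact k"
      by (intro divide_right_mono mat_pow_entry_bound assms) auto
    finally show ?thesis by (simp add: divide_inverse mult.commute)
  qed
  then show "\<exists>N. \<forall>k\<ge>N. norm ((M ^\<^sub>m k) $$ (i,j) / of_nat (fact k)) \<le> inverse (fact k) * ?c ^ k"
    by blast
qed

lemma mat_exp_carrier: "A \<in> carrier_mat n n \<Longrightarrow> mat_exp A \<in> carrier_mat n n"
  by (simp add: mat_exp_def)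

lemma mat_exp_entry:
  "A \<in> carrier_mat n n \<Longrightarrow> i < n \<Longrightarrow> j < n \<Longrightarrow>
   mat_exp A $$ (i,j) = (\<Sum>k. (A ^\<^sub>m k) $$ (i,j) / of_nat (fact k))"
  by (simp add: mat_exp_def)

section \<open>The matrix exponential under similarity\<close>

lemma mat_triple_product_entry:
  fixes P M Q :: "'a::comm_ring_1 mat"
  assumes "P \<in> carrier_mat n n" "M \<in> carrier_mat n n" "Q \<in> carrier_mat n n" "i < n" "j < n"
  shows "(P * M * Q) $$ (i,j) = (\<Sum>a<n. \<Sum>b<n. P $$ (i,a) * M $$ (a,b) * Q $$ (b,j))"
proof -
  have "(P * M * Q) $$ (i,j) = (\<Sum>b<n. (P * M) $$ (i,b) * Q $$ (b,j))"
    using assms by (intro mat_mult_entry[of _ n n _ n]) auto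
  also have "\<dots> = (\<Sum>b<n. (\<Sum>a<n. P $$ (i,a) * M $$ (a,b)) * Q $$ (b,j))"
    using assms by (intro sum.cong refl arg_cong2[where f = "(*)"] mat_mult_entry[of _ n n _ n]) auto
  also have "\<dots> = (\<Sum>b<n. \<Sum>a<n. P $$ (i,a) * M $$ (a,b) * Q $$ (b,j))"
    by (simp add: sum_distrib_right)
  also have "\<dots> = (\<Sum>a<n. \<Sum>b<n. P $$ (i,a) * M $$ (a,b) * Q $$ (b,j))"
    by (rule sum.swap)
  finally show ?thesis .
qed

text \<open>\<open>e^(P J Q) = P e^J Q\<close> for mutually inverse \<open>P, Q\<close>: apply \<open>(P J Q)^k = P J^k Q\<close>
  termwise and exchange the (finite) matrix sums with the convergent series.\<close>
lemma mat_exp_similar_wit: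
  fixes A J P Q :: "complex mat"
  assumes w: "similar_mat_wit A J P Q" and A: "A \<in> carrier_mat n n"
  shows "mat_exp A = P * mat_exp J * Q"
proof -
  from similar_mat_witD2[OF A w]
  have J: "J \<in> carrier_mat n n" and P: "P \<in> carrier_mat n n" and Q: "Q \<in> carrier_mat n n"
    by auto
  have EJ: "mat_exp J \<in> carrier_mat n n" using J by (rule mat_exp_carrier)
  show ?thesis
  proof (rule eq_matI)
    show "dim_row (mat_exp A) = dim_row (P * mat_exp J * Q)"
      and "dim_col (mat_exp A) = dim_col (P * mat_exp J * Q)"
      using A P EJ Q by (simp_all add: mat_exp_def)
    fix i j assume "i < dim_row (P * mat_exp J * Q)" "j < dim_col (P * mat_exp J * Q)"
    hence ij: "i < n" "j < n" using P Q by auto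
    define f where "f a b k = P $$ (i,a) * Q $$ (b,j) * ((J ^\<^sub>m k) $$ (a,b) / of_nat (fact k))"
      for a b k
    have f_summable: "summable (f a b)" if "a < n" "b < n" for a b
      unfolding f_def by (intro summable_mult mat_exp_series_summable[OF J] that)
    have f_sum: "(\<Sum>k. f a b k) = P $$ (i,a) * mat_exp J $$ (a,b) * Q $$ (b,j)"
      if "a < n" "b < n" for a b
      unfolding f_def mat_exp_entry[OF J that]
      by (subst suminf_mult[OF mat_exp_series_summable[OF J that]]) (simp add: ac_simps)
    have series_term: "(A ^\<^sub>m k) $$ (i,j) / of_nat (fact k) = (\<Sum>a<n. \<Sum>b<n. f a b k)" for k
    proof -
      have "A ^\<^sub>m k = P * J ^\<^sub>m k * Q" using w by (rule similar_mat_wit_pow_id)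
      thus ?thesis
        using mat_triple_product_entry[OF P pow_carrier_mat[OF J] Q ij]
        by (simp add: f_def sum_divide_distrib ac_simps)
    qed
    have "mat_exp A $$ (i,j) = (\<Sum>k. \<Sum>a<n. \<Sum>b<n. f a b k)"
      using mat_exp_entry[OF A ij] series_term by simp
    also have "\<dots> = (\<Sum>a<n. \<Sum>k. \<Sum>b<n. f a b k)"
      by (rule suminf_sum) (auto intro!: summable_sum f_summable)
    also have "\<dots> = (\<Sum>a<n. \<Sum>b<n. \<Sum>k. f a b k)"
      by (intro sum.cong refl suminf_sum f_summable) auto
    also have "\<dots> = (P * mat_exp J * Q) $$ (i,j)"
      using mat_triple_product_entry[OF P EJ Q ij] f_sum by simp
    finally show "mat_exp A $$ (i,j) = (P * mat_exp J * Q) $$ (i,j)" .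
  qed
qed

lemma mat_exp_similar:
  fixes A B :: "complex mat"
  assumes "similar_mat A B" and A: "A \<in> carrier_mat n n"
  shows "similar_mat (mat_exp A) (mat_exp B)"
proof -
  obtain P Q where w: "similar_mat_wit A B P Q" using assms(1) unfolding similar_mat_def by blast
  note wD = similar_mat_witD2[OF A w]
  have "{mat_exp A, mat_exp B, P, Q} \<subseteq> carrier_mat n n"
    using mat_exp_carrier[OF A] mat_exp_carrier[OF wD(5)] wD(6,7) by simp
  from similar_matI[OF this wD(1,2) mat_exp_similar_wit[OF w A]] show ?thesis .
qed

section \<open>The matrix exponential of an upper triangular matrix\<close>

lemma upper_triangular_pow:
  fixes J :: "'a::comm_ring_1 mat"
  assumes J: "J \<in> carrier_mat n n" and ut: "upper_triangular J"
  shows "(\<forall>i<n. \<forall>j<i. (J ^\<^sub>m k) $$ (i,j) = 0) \<and> (\<forall>i<n. (J ^\<^sub>m k) $$ (i,i) = J $$ (i,i) ^ k)"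
proof (induction k)
  case 0
  then show ?case using J by auto
next
  case (Suc k)
  have entry: "(J ^\<^sub>m Suc k) $$ (i,j) = (\<Sum>l<n. (J ^\<^sub>m k) $$ (i,l) * J $$ (l,j))"
    if "i < n" "j < n" for i j
    using that J by (simp only: pow_mat.simps(2), intro mat_mult_entry[of _ n n _ n]) auto
  have below: "J $$ (l,j) = 0" if "j < l" "l < n" for l j using ut J that by auto
  have "(J ^\<^sub>m Suc k) $$ (i,j) = 0" if "i < n" "j < i" for i j
  proof -
    have "(\<Sum>l<n. (J ^\<^sub>m k) $$ (i,l) * J $$ (l,j)) = 0"
    proof (rule sum.neutral, intro ballI)
      fix l assume "l \<in> {..<n}"
      then show "(J ^\<^sub>m k) $$ (i,l) * J $$ (l,j) = 0"
        using Suc.IH below[of j l] that by (cases "l < i") auto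
    qed
    thus ?thesis using entry[of i j] that by simp
  qed
  moreover have "(J ^\<^sub>m Suc k) $$ (i,i) = J $$ (i,i) ^ Suc k" if "i < n" for i
  proof -
    have "(\<Sum>l<n. (J ^\<^sub>m k) $$ (i,l) * J $$ (l,i))
        = (\<Sum>l<n. if l = i then J $$ (i,i) ^ k * J $$ (i,i) else 0)"
    proof (rule sum.cong[OF refl])
      fix l assume "l \<in> {..<n}"
      then show "(J ^\<^sub>m k) $$ (i,l) * J $$ (l,i) = (if l = i then J $$ (i,i) ^ k * J $$ (i,i) else 0)"
        using Suc.IH below[of i l] that by (cases "l < i"; cases "l = i") auto
    qed
    thus ?thesis using entry[of i i] that by (simp add: mult.commute)
  qed
  ultimately show ?case by auto
qed

lemma exp_series_complex: "(\<Sum>k. (x::complex) ^ k / of_nat (fact k)) = exp x"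
proof -
  have "(\<lambda>k. x ^ k / of_nat (fact k)) = (\<lambda>k. x ^ k /\<^sub>R fact k)"
    by (auto simp: scaleR_conv_of_real divide_inverse mult.commute)
  thus ?thesis using exp_converges[of x] sums_unique by metis
qed

lemma mat_exp_upper_triangular:
  fixes J :: "complex mat"
  assumes J: "J \<in> carrier_mat n n" and ut: "upper_triangular J"
  shows "upper_triangular (mat_exp J)"
    and "i < n \<Longrightarrow> mat_exp J $$ (i,i) = exp (J $$ (i,i))"
proof -
  show "upper_triangular (mat_exp J)"
  proof (rule upper_triangularI)
    fix i j assume "j < i" "i < dim_row (mat_exp J)"
    hence "i < n" "j < n" "j < i" using J by (auto simp: mat_exp_def)
    thus "mat_exp J $$ (i,j) = 0" using upper_triangular_pow[OF J ut] mat_exp_entry[OF J] by simp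
  qed
  show "i < n \<Longrightarrow> mat_exp J $$ (i,i) = exp (J $$ (i,i))"
    using upper_triangular_pow[OF J ut] mat_exp_entry[OF J] exp_series_complex by simp
qed

section \<open>The spectrum of the exponential\<close>

lemma Sp_upper_triangular:
  fixes U :: "complex mat"
  assumes U: "U \<in> carrier_mat n n" and ut: "upper_triangular U"
  shows "Sp U = (\<lambda>i. U $$ (i,i)) ` {..<n}"
proof -
  have "eigenvalue U x \<longleftrightarrow> poly (\<Prod>a\<leftarrow>diag_mat U. [:- a, 1:]) x = 0" for x
    using eigenvalue_root_char_poly[OF U] char_poly_upper_triangular[OF U ut] by simp
  also have "\<dots> x \<longleftrightarrow> x \<in> set (diag_mat U)" for x
    unfolding poly_prod_list_zero_iff by auto
  finally show ?thesis
    using U unfolding Sp_def diag_mat_def by auto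
qed

text \<open>Similar matrices share their characteristic polynomial, hence their spectrum.\<close>
lemma Sp_similar:
  fixes A B :: "complex mat"
  assumes "similar_mat A B" "A \<in> carrier_mat n n" "B \<in> carrier_mat n n"
  shows "Sp A = Sp B"
  using char_poly_similar[OF assms(1)] eigenvalue_root_char_poly[OF assms(2)]
    eigenvalue_root_char_poly[OF assms(3)]
  unfolding Sp_def by auto

text \<open>Via a Schur form: the spectrum of a complex matrix is finite and the spectrum of its
  exponential is the image of its spectrum under \<open>exp\<close>.\<close>
lemma Sp_mat_exp:
  fixes A :: "complex mat"
  assumes A: "A \<in> carrier_mat n n"
  shows "Sp (mat_exp A) = exp ` Sp A" and "finite (Sp A)"
proof -
  obtain es where "char_poly A = (\<Prod>a\<leftarrow>es. [:- a, 1:])"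
    using char_poly_factorized[OF A] by auto
  then obtain U where U: "U \<in> carrier_mat n n" and ut: "upper_triangular U"
    and sim: "similar_mat A U"
    using schur_decomposition_exists[OF A] by blast
  have Sp_A: "Sp A = (\<lambda>i. U $$ (i,i)) ` {..<n}"
    using Sp_similar[OF sim A U] Sp_upper_triangular[OF U ut] by simp
  then show "finite (Sp A)" by simp
  have "Sp (mat_exp A) = Sp (mat_exp U)"
    using Sp_similar[OF mat_exp_similar[OF sim A] mat_exp_carrier[OF A] mat_exp_carrier[OF U]] .
  also have "\<dots> = (\<lambda>i. exp (U $$ (i,i))) ` {..<n}"
    using Sp_upper_triangular[OF mat_exp_carrier[OF U] mat_exp_upper_triangular(1)[OF U ut]]
      mat_exp_upper_triangular(2)[OF U ut] by simp
  also have "\<dots> = exp ` Sp A"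
    unfolding Sp_A image_image ..
  finally show "Sp (mat_exp A) = exp ` Sp A" .
qed

text \<open>The hypothesis on the spectrum: if \<open>exp(l)^d = exp(l')^d\<close> then \<open>l - l'\<close> lies in
  \<open>2\<pi>i\<bbbQ>\<close>, hence in \<open>2\<pi>i\<int>\<close>, so \<open>exp l = exp l'\<close>.\<close>
lemma exp_power_eq_imp_eq:
  fixes l l' :: complex
  assumes hyp: "\<forall>l\<in>S. \<forall>m\<in>S.
           (\<exists>q::rat. l - m = 2 * \<i> * pi * of_rat q) \<longrightarrow>
           (\<exists>z::int. l - m = 2 * \<i> * pi * of_int z)"
    and l: "l \<in> S" and l': "l' \<in> S" and d: "d \<ge> 1" and eq: "exp l ^ d = exp l' ^ d"
  shows "exp l = exp l'"
proof -
  have "exp (of_nat d * l) = exp (of_nat d * l')" using eq by (simp add: exp_of_nat_mult)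
  then obtain z :: int where z: "of_nat d * l = of_nat d * l' + (of_int (2 * z) * pi) * \<i>"
    unfolding exp_eq by blast
  have d_nz: "(of_nat d :: complex) \<noteq> 0" using d by simp
  have "of_nat d * (l - l') = of_nat d * (2 * \<i> * pi * (of_int z / of_nat d))"
    using z d_nz by (simp add: field_simps)
  then have "l - l' = 2 * \<i> * pi * (of_int z / of_nat d)"
    using d_nz by (metis mult_left_cancel)
  also have "(of_int z / of_nat d :: complex) = of_rat (of_int z / of_nat d)"
    by (simp add: of_rat_divide)
  finally have "l - l' = 2 * \<i> * pi * of_rat (of_int z / of_nat d)" .
  with hyp l l' obtain w :: int where "l - l' = 2 * \<i> * pi * of_int w" by blast
  hence "l = l' + (of_int (2 * w) * pi) * \<i>" by (simp add: algebra_simps)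
  thus ?thesis unfolding exp_eq by blast
qed

text \<open>If \<open>l^k m = l'^k m'\<close> for two exponents \<open>k\<^sub>1 < k\<^sub>2\<close>, then \<open>l^d = l'^d\<close> for
  \<open>d = k\<^sub>2 - k\<^sub>1\<close>.\<close>
lemma power_collision_unique:
  fixes l l' m m' :: "'a::idom"
  assumes nz: "l \<noteq> 0" "m \<noteq> 0"
    and no_torsion: "\<And>d. d \<ge> 1 \<Longrightarrow> l ^ d = l' ^ d \<Longrightarrow> l = l'" and "l \<noteq> l'"
    and eq1: "l ^ k1 * m = l' ^ k1 * m'" and eq2: "l ^ k2 * m = l' ^ k2 * m'"
  shows "k1 = k2"
proof -
  have False if "a < b" and eqa: "l ^ a * m = l' ^ a * m'" and eqb: "l ^ b * m = l' ^ b * m'"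
    for a b :: nat
  proof -
    define d where "d = b - a"
    have b: "b = a + d" and "d \<ge> 1" using \<open>a < b\<close> by (auto simp: d_def)
    have "l ^ d * (l ^ a * m) = l' ^ d * (l' ^ a * m')"
      using eqb by (simp add: b power_add algebra_simps)
    also have "\<dots> = l' ^ d * (l ^ a * m)" using eqa by simp
    finally have "l ^ d = l' ^ d" using nz by simp
    with no_torsion \<open>d \<ge> 1\<close> \<open>l \<noteq> l'\<close> show False by blast
  qed
  with eq1 eq2 show "k1 = k2" by (metis linorder_neqE_nat)
qed

text \<open>Each quadruple with \<open>l \<noteq> l'\<close> excludes at most one \<open>k\<close>.\<close>
lemma exists_injective_power_map:
  fixes S T :: "'a::idom set"
  assumes "finite S" "finite T" "0 \<notin> S" "0 \<notin> T"
    and no_torsion: "\<And>l l' d. l \<in> S \<Longrightarrow> l' \<in> S \<Longrightarrow> d \<ge> 1 \<Longrightarrow> l ^ d = l' ^ d \<Longrightarrow> l = l'"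
  shows "\<exists>k::nat. k \<ge> 1 \<and> inj_on (\<lambda>(l, m). l ^ k * m) (S \<times> T)"
proof -
  define bad :: "'a \<times> 'a \<times> 'a \<times> 'a \<Rightarrow> nat set"
    where "bad = (\<lambda>(l, l', m, m'). {k::nat. l \<noteq> l' \<and> l ^ k * m = l' ^ k * m'})"
  have finite_bad: "finite (bad (l, l', m, m'))" if "l \<in> S" "l' \<in> S" "m \<in> T" for l l' m m'
  proof -
    have unique: "k1 = k2" if "k1 \<in> bad (l, l', m, m')" "k2 \<in> bad (l, l', m, m')" for k1 k2
      using that \<open>l \<in> S\<close> \<open>l' \<in> S\<close> \<open>m \<in> T\<close> assms(3,4)
      by (intro power_collision_unique[of l m l' _ m']) (auto simp: bad_def intro: no_torsion)
    show ?thesis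
    proof (cases "bad (l, l', m, m') = {}")
      case False
      then obtain k where "k \<in> bad (l, l', m, m')" by blast
      with unique have "bad (l, l', m, m') \<subseteq> {k}" by blast
      then show ?thesis by (rule finite_subset) simp
    qed simp
  qed
  have "finite (\<Union>x\<in>S \<times> S \<times> T \<times> T. bad x)"
    using assms(1,2) finite_bad by (intro finite_UN_I) auto
  then obtain k where k: "k \<notin> insert 0 (\<Union>x\<in>S \<times> S \<times> T \<times> T. bad x)"
    using ex_new_if_finite[OF infinite_UNIV_nat] by blast
  have "inj_on (\<lambda>(l, m). l ^ k * m) (S \<times> T)"
  proof (rule inj_onI, clarify)
    fix l m l' m' assume "l \<in> S" "m \<in> T" "l' \<in> S" "m' \<in> T" and eq: "l ^ k * m = l' ^ k * m'"
    then have "l = l'" using k by (auto simp: bad_def)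
    then show "l = l' \<and> m = m'" using eq \<open>l \<in> S\<close> assms(3) by auto
  qed
  moreover have "k \<ge> 1" using k by simp
  ultimately show ?thesis by blast
qed

theorem mainTheorem9:
  fixes A B :: "complex mat" and n :: nat
  assumes "A \<in> carrier_mat n n" and "B \<in> carrier_mat n n"
    and "\<forall>l\<in>Sp A. \<forall>m\<in>Sp A.
           (\<exists>q::rat. l - m = 2 * \<i> * pi * of_rat q) \<longrightarrow>
           (\<exists>z::int. l - m = 2 * \<i> * pi * of_int z)"
  shows "\<exists>k::nat. k \<ge> 1 \<and>
           inj_on (\<lambda>(l, m). l ^ k * m) (Sp (mat_exp A) \<times> Sp (mat_exp B))"
proof (rule exists_injective_power_map)
  note Sp_A = Sp_mat_exp[OF assms(1)] and Sp_B = Sp_mat_exp[OF assms(2)]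
  show "finite (Sp (mat_exp A))" "finite (Sp (mat_exp B))"
    using Sp_A Sp_B by simp_all
  show "0 \<notin> Sp (mat_exp A)" "0 \<notin> Sp (mat_exp B)"
    using Sp_A Sp_B by auto
  show "l = l'" if "l \<in> Sp (mat_exp A)" "l' \<in> Sp (mat_exp A)" "d \<ge> 1" "l ^ d = l' ^ d"
    for l l' and d :: nat
    using that exp_power_eq_imp_eq[OF assms(3)] unfolding Sp_A(1) by blast
qed

end
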